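(* Let $(X_i)_{i\in\mathbb{T}}$ ($\mathbb{T}$ one of $\mathbb{Z},\mathbb{N},\mathbb{N}\setminus\{0\}$) be a stationary $m$-dependent sequence of $\mathbb{R}^d$-valued random vectors such that $X_1$ has compact support $\mathbb{M}$. Let $\epsilon_0>0$ and suppose that for every $0<\epsilon<\epsilon_0$ there exists a constant $\kappa_\epsilon>0$ with $\rho_{m+1}(\epsilon)\ge\kappa_\epsilon$. Then for any $0<\epsilon<\epsilon_0$ and any $n\ge m+1$, $$\mathbb{P}\big(d_H(\mathbb{X}_n,\mathbb{M})>\epsilon\big)\le \frac{(1-\kappa_{\epsilon/2})^{[\frac12[\frac{n}{m+1}]]}}{\kappa_{\epsilon/4}},$$ where $[\cdot]$ is the integer part. Consequently, for any $\alpha\in(0,1)$ and any $n\ge n_0$, where $$n_0=\frac{2(m+1)}{\kappa_{\epsilon/2}}\Big(\log\frac1\alpha+\log\frac{1}{\kappa_{\epsilon/4}}\Big)+3(m+1),$$ one has $d_H(\mathbb{X}_n,\mathbb{M})\le\epsilon$ with probability at least $1-\alpha$.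
   Context: The sequence is $m$-dependent if for every $k$ the $\sigma$-fields $\sigma(X_i, i\le k)$ and $\sigma(X_i, i\ge k+m+1)$ are independent. $\mathbb{X}_n=\{X_1,\ldots,X_n\}$. For $p\ge1$ and $\epsilon>0$, $\rho_p(\epsilon)=\inf_{x\in\mathbb{M}_{dp}}\mathbb{P}\big(\|(X_1,\ldots,X_p)^t-x\|\le\epsilon\big)$, where $\mathbb{M}_{dp}\subset\mathbb{R}^{dp}$ is the support of $(X_1,\ldots,X_p)^t$ and the norm is Euclidean. Supports are smallest closed sets of full mass. $d_H$ is the Hausdorff distance $d_H(A,B)=\max(\sup_{x\in A}\inf_{y\in B}\|x-y\|,\sup_{x\in B}\inf_{y\in A}\|x-y\|)$. *)

theory Defs
  imports "HOL-Probability.Probability"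
begin

text \<open>Hausdorff distance, as in the paper (used here only for nonempty compact sets).\<close>
definition hausdorff_dist :: "'a::metric_space set \<Rightarrow> 'a set \<Rightarrow> real" where
  "hausdorff_dist A B =
     max (SUP x\<in>A. INF y\<in>B. dist x y) (SUP x\<in>B. INF y\<in>A. dist x y)"

definition rv_support :: "'a measure \<Rightarrow> ('a \<Rightarrow> 'b::topological_space) \<Rightarrow> 'b set" where
  "rv_support M Y = \<Inter> {C. closed C \<and> measure M {\<omega> \<in> space M. Y \<omega> \<in> C} = 1}"

text \<open>The block (X_1,...,X_p) as an element of R^{dp}, represented as a function
  on nat that is zero outside {0..<p}; the i-th entry is X_(i+1).\<close>
definition block :: "nat \<Rightarrow> (nat \<Rightarrow> 'a \<Rightarrow> real^'d) \<Rightarrow> 'a \<Rightarrow> nat \<Rightarrow> real^'d" where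
  "block p X \<omega> = (\<lambda>i. if i < p then X (Suc i) \<omega> else 0)"

definition dist_block :: "nat \<Rightarrow> (nat \<Rightarrow> real^'d) \<Rightarrow> (nat \<Rightarrow> real^'d) \<Rightarrow> real" where
  "dist_block p x y = sqrt (\<Sum>i<p. (norm (x i - y i))\<^sup>2)"

text \<open>Support of (X_1,...,X_p) in R^{dp} (closed sets taken inside the copy of R^{dp}).\<close>
definition block_support :: "'a measure \<Rightarrow> nat \<Rightarrow> (nat \<Rightarrow> 'a \<Rightarrow> real^'d) \<Rightarrow> (nat \<Rightarrow> real^'d) set" where
  "block_support M p X = \<Inter> {C. closed C \<and> C \<subseteq> {x. \<forall>i\<ge>p. x i = 0} \<and>
        measure M {\<omega> \<in> space M. block p X \<omega> \<in> C} = 1}"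

definition rho :: "'a measure \<Rightarrow> (nat \<Rightarrow> 'a \<Rightarrow> real^'d) \<Rightarrow> nat \<Rightarrow> real \<Rightarrow> real" where
  "rho M X p \<epsilon> = (INF x\<in>block_support M p X.
      measure M {\<omega> \<in> space M. dist_block p (block p X \<omega>) x \<le> \<epsilon>})"

definition stationary :: "'a measure \<Rightarrow> (nat \<Rightarrow> 'a \<Rightarrow> real^'d) \<Rightarrow> bool" where
  "stationary M X \<longleftrightarrow> (\<forall>k.
     distr M (PiM UNIV (\<lambda>_. borel)) (\<lambda>\<omega> i. X (i + k) \<omega>) =
     distr M (PiM UNIV (\<lambda>_. borel)) (\<lambda>\<omega> i. X i \<omega>))"

definition m_dependent :: "'a measure \<Rightarrow> nat \<Rightarrow> (nat \<Rightarrow> 'a \<Rightarrow> real^'d) \<Rightarrow> bool" where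
  "m_dependent M m X \<longleftrightarrow> (\<forall>k.
     prob_space.indep_var M
       (PiM {..k} (\<lambda>_. borel)) (\<lambda>\<omega>. restrict (\<lambda>i. X i \<omega>) {..k})
       (PiM {k+m+1..} (\<lambda>_. borel)) (\<lambda>\<omega>. restrict (\<lambda>i. X i \<omega>) {k+m+1..}))"

end

theory Submission
  imports Defs
begin

text \<open>
  Let \<open>S\<close> be the support of \<open>X 1\<close> and \<open>T\<close> the set of first coordinates of points of the
  support of the block \<open>(X 1, \<dots>, X (m + 1))\<close>. Then \<open>S \<subseteq> closure T\<close>, and by stationarity
  the hypothesis on \<open>\<rho>\<close> says that each \<open>X i\<close> falls into the closed \<open>r\<close>-ball around any
  \<open>c \<in> T\<close> with probability at least \<open>\<kappa> r\<close>. A maximal \<open>\<epsilon>/2\<close>-separated subset \<open>C\<close> of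
  \<open>T\<close> carries disjoint \<open>\<epsilon>/4\<close>-balls, so \<open>card C \<le> 1 / \<kappa> (\<epsilon>/4)\<close>, and it is an
  \<open>\<epsilon>/2\<close>-net of \<open>T\<close>.

  Almost surely all \<open>X i\<close> lie in \<open>S\<close>, so if the sample is \<open>\<epsilon>\<close>-far from \<open>S\<close> in Hausdorff
  distance, some point of \<open>S\<close>, hence of \<open>T\<close>, hence some \<open>c \<in> C\<close>, is \<open>\<epsilon>/2\<close>-far from every
  \<open>X i\<close>. Along the indices \<open>(2j + 1)(m + 1) \<le> n\<close>, which are more than \<open>m\<close> apart,
  \<open>m\<close>-dependence bounds the probability of this by \<open>(1 - \<kappa> (\<epsilon>/2)) ^ J\<close> with
  \<open>J = (n div (m + 1)) div 2\<close>. A union bound over \<open>C\<close> gives the tail estimate, and the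
  sample size bound follows from \<open>1 - x \<le> exp (- x)\<close>.
\<close>

section \<open>Supports of random vectors\<close>

lemma (in prob_space) AE_in_Inter_closed:
  fixes Y :: "'a \<Rightarrow> 'b::second_countable_topology"
  assumes closed: "\<And>C. C \<in> F \<Longrightarrow> closed C"
    and full: "\<And>C. C \<in> F \<Longrightarrow> prob {\<omega>\<in>space M. Y \<omega> \<in> C} = 1"
  shows "AE \<omega> in M. Y \<omega> \<in> \<Inter>F"
proof -
  \<comment> \<open>Lindelof: the open complements have a countable subcover, so \<open>\<Inter>F\<close> is a countable
    intersection.\<close>
  have "\<And>U. U \<in> uminus ` F \<Longrightarrow> open U" using closed by auto
  then obtain G' where G': "G' \<subseteq> uminus ` F" "countable G'" "\<Union>G' = \<Union>(uminus ` F)"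
    using Lindelof by metis
  define G where "G = uminus ` G'"
  have "G \<subseteq> F" "countable G" using G' unfolding G_def by auto
  have "- \<Inter>G = - \<Inter>F" using G'(3) unfolding G_def by auto
  then have Inter_eq: "\<Inter>G = \<Inter>F" by (metis double_complement)
  have "\<forall>C\<in>G. AE \<omega> in M. \<omega> \<in> {\<omega>\<in>space M. Y \<omega> \<in> C}"
    using \<open>G \<subseteq> F\<close> full by (intro ballI AE_prob_1) auto
  then have "AE \<omega> in M. \<forall>C\<in>G. Y \<omega> \<in> C"
    by (simp add: AE_ball_countable[OF \<open>countable G\<close>])
  then show ?thesis
    by eventually_elim (use Inter_eq in blast)
qed

lemma closed_rv_support: "closed (rv_support M Y)"
  unfolding rv_support_def by (intro closed_Inter) auto

lemma rv_support_subset: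
  assumes "closed C" "measure M {\<omega> \<in> space M. Y \<omega> \<in> C} = 1"
  shows "rv_support M Y \<subseteq> C"
  using assms unfolding rv_support_def by blast

lemma (in prob_space) AE_in_rv_support:
  fixes Y :: "'a \<Rightarrow> 'b::second_countable_topology"
  shows "AE \<omega> in M. Y \<omega> \<in> rv_support M Y"
  unfolding rv_support_def by (rule AE_in_Inter_closed) auto

lemma (in prob_space) prob_in_rv_support:
  fixes Y :: "'a \<Rightarrow> 'b::second_countable_topology"
  assumes "Y \<in> borel_measurable M"
  shows "prob {\<omega>\<in>space M. Y \<omega> \<in> rv_support M Y} = 1"
proof -
  have "Y -` rv_support M Y \<inter> space M \<in> events"
    by (rule measurable_sets[OF assms borel_closed[OF closed_rv_support]])
  then have "{\<omega>\<in>space M. Y \<omega> \<in> rv_support M Y} \<in> events"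
    by (simp add: vimage_def Int_def conj_commute)
  with AE_in_rv_support[of Y] show ?thesis
    by (subst prob_eq_1) auto
qed

lemma (in prob_space) AE_block_in_block_support:
  "AE \<omega> in M. block p X \<omega> \<in> block_support M p X"
  unfolding block_support_def by (rule AE_in_Inter_closed) auto

section \<open>Stationary and \<open>m\<close>-dependent sequences\<close>

lemma stationary_distr_eq:
  fixes X :: "nat \<Rightarrow> 'a \<Rightarrow> real^'d"
  assumes rv: "\<And>i. X i \<in> borel_measurable M" and "stationary M X"
  shows "distr M borel (X i) = distr M borel (X 0)"
proof -
  have shift: "(\<lambda>\<omega> j. X (j + k) \<omega>) \<in> measurable M (PiM UNIV (\<lambda>_. borel))" for k
    by (rule measurable_PiM_single') (auto simp: rv)
  have head: "(\<lambda>f. f 0) \<in> measurable (PiM UNIV (\<lambda>_. borel)) (borel :: (real^'d) measure)"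
    by (rule measurable_component_singleton) simp
  have "distr (distr M (PiM UNIV (\<lambda>_. borel)) (\<lambda>\<omega> j. X (j + i) \<omega>)) borel (\<lambda>f. f 0)
      = distr (distr M (PiM UNIV (\<lambda>_. borel)) (\<lambda>\<omega> j. X (j + 0) \<omega>)) borel (\<lambda>f. f 0)"
    using \<open>stationary M X\<close> unfolding stationary_def by metis
  then show ?thesis
    using distr_distr[OF head shift[of i]] distr_distr[OF head shift[of 0]] by (simp add: o_def)
qed

lemma stationary_prob_eq:
  fixes X :: "nat \<Rightarrow> 'a \<Rightarrow> real^'d"
  assumes rv: "\<And>i. X i \<in> borel_measurable M" and "stationary M X" and A: "A \<in> sets borel"
  shows "measure M {\<omega>\<in>space M. X i \<omega> \<in> A} = measure M {\<omega>\<in>space M. X j \<omega> \<in> A}"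
proof -
  have "measure M {\<omega>\<in>space M. X k \<omega> \<in> A} = measure (distr M borel (X k)) A" for k
    using measure_distr[OF rv A] by (simp add: vimage_def Int_def conj_commute)
  then show ?thesis
    using stationary_distr_eq[OF rv \<open>stationary M X\<close>, of i] stationary_distr_eq[OF rv \<open>stationary M X\<close>, of j]
    by simp
qed

lemma (in prob_space) m_dependent_prob_Int:
  fixes X :: "nat \<Rightarrow> 'a \<Rightarrow> real^'d"
  assumes "m_dependent M m X"
    and A: "A \<in> sets (PiM {..k} (\<lambda>_. borel))" and B: "B \<in> sets (PiM {k+m+1..} (\<lambda>_. borel))"
  shows "prob {\<omega>\<in>space M. restrict (\<lambda>i. X i \<omega>) {..k} \<in> A \<and> restrict (\<lambda>i. X i \<omega>) {k+m+1..} \<in> B}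
       = prob {\<omega>\<in>space M. restrict (\<lambda>i. X i \<omega>) {..k} \<in> A}
         * prob {\<omega>\<in>space M. restrict (\<lambda>i. X i \<omega>) {k+m+1..} \<in> B}"
proof -
  have "indep_var (PiM {..k} (\<lambda>_. borel)) (\<lambda>\<omega>. restrict (\<lambda>i. X i \<omega>) {..k})
                  (PiM {k+m+1..} (\<lambda>_. borel)) (\<lambda>\<omega>. restrict (\<lambda>i. X i \<omega>) {k+m+1..})"
    using \<open>m_dependent M m X\<close> unfolding m_dependent_def by blast
  from indep_varD[OF this A B] show ?thesis
    by (simp add: vimage_def Int_def conj_commute)
qed

lemma (in prob_space) m_dependent_prob_past_future:
  fixes X :: "nat \<Rightarrow> 'a \<Rightarrow> real^'d" and t :: "nat \<Rightarrow> nat"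
  assumes mdep: "m_dependent M m X" and A: "A \<in> sets borel" and B: "B \<in> sets borel"
    and past: "\<And>j. j < J \<Longrightarrow> t j \<le> k" and future: "k + m < s"
  shows "prob {\<omega>\<in>space M. (\<forall>j<J. X (t j) \<omega> \<in> A) \<and> X s \<omega> \<in> B}
       = prob {\<omega>\<in>space M. \<forall>j<J. X (t j) \<omega> \<in> A} * prob {\<omega>\<in>space M. X s \<omega> \<in> B}"
proof -
  define Past where "Past = {f \<in> space (PiM {..k} (\<lambda>_. borel)). \<forall>j\<in>{..<J}. f (t j) \<in> A}"
  define Future where "Future = {f \<in> space (PiM {k+m+1..} (\<lambda>_. borel)). f s \<in> B}"
  have coordinate: "{f \<in> space (PiM I (\<lambda>_. borel)). f i \<in> C} \<in> sets (PiM I (\<lambda>_. borel))"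
    if "i \<in> I" "C \<in> sets borel" for i :: nat and I and C :: "(real^'d) set"
    using that by measurable
  have "Past \<in> sets (PiM {..k} (\<lambda>_. borel))"
    unfolding Past_def by (intro sets.sets_Collect_finite_All coordinate A) (use past in auto)
  moreover have "Future \<in> sets (PiM {k+m+1..} (\<lambda>_. borel))"
    unfolding Future_def by (intro coordinate B) (use future in simp)
  ultimately have "prob {\<omega>\<in>space M. restrict (\<lambda>i. X i \<omega>) {..k} \<in> Past
                        \<and> restrict (\<lambda>i. X i \<omega>) {k+m+1..} \<in> Future}
      = prob {\<omega>\<in>space M. restrict (\<lambda>i. X i \<omega>) {..k} \<in> Past}
        * prob {\<omega>\<in>space M. restrict (\<lambda>i. X i \<omega>) {k+m+1..} \<in> Future}"
    by (rule m_dependent_prob_Int[OF mdep])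
  moreover have "{\<omega>\<in>space M. restrict (\<lambda>i. X i \<omega>) {..k} \<in> Past}
      = {\<omega>\<in>space M. \<forall>j<J. X (t j) \<omega> \<in> A}"
    using past unfolding Past_def by (auto simp: space_PiM)
  moreover have "{\<omega>\<in>space M. restrict (\<lambda>i. X i \<omega>) {k+m+1..} \<in> Future}
      = {\<omega>\<in>space M. X s \<omega> \<in> B}"
    using future unfolding Future_def by (auto simp: space_PiM)
  moreover have "{\<omega>\<in>space M. restrict (\<lambda>i. X i \<omega>) {..k} \<in> Past
                        \<and> restrict (\<lambda>i. X i \<omega>) {k+m+1..} \<in> Future}
      = {\<omega>\<in>space M. (\<forall>j<J. X (t j) \<omega> \<in> A) \<and> X s \<omega> \<in> B}"
    using past future unfolding Past_def Future_def by (auto simp: space_PiM)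
  ultimately show ?thesis by simp
qed

lemma (in prob_space) m_dependent_prob_all_le_power:
  fixes X :: "nat \<Rightarrow> 'a \<Rightarrow> real^'d" and t :: "nat \<Rightarrow> nat"
  assumes mdep: "m_dependent M m X" and gap: "\<And>j. t j + m < t (Suc j)"
    and A: "A \<in> sets borel" and q: "\<And>i. prob {\<omega>\<in>space M. X i \<omega> \<in> A} \<le> q"
  shows "prob {\<omega>\<in>space M. \<forall>j<J. X (t j) \<omega> \<in> A} \<le> q ^ J"
proof (induction J)
  case 0
  then show ?case by simp
next
  case (Suc J)
  show ?case
  proof (cases "J = 0")
    case True
    then show ?thesis using q[of "t 0"] by simp
  next
    case False
    have "t j \<le> t (Suc j)" for j using gap[of j] by simp
    then have past: "t j \<le> t (J - 1)" if "j < J" for j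
      using lift_Suc_mono_le[of t j "J - 1"] that by simp
    have future: "t (J - 1) + m < t J" using gap[of "J - 1"] False by simp
    have "{\<omega>\<in>space M. \<forall>j<Suc J. X (t j) \<omega> \<in> A}
        = {\<omega>\<in>space M. (\<forall>j<J. X (t j) \<omega> \<in> A) \<and> X (t J) \<omega> \<in> A}"
      by (auto simp: less_Suc_eq)
    then have "prob {\<omega>\<in>space M. \<forall>j<Suc J. X (t j) \<omega> \<in> A}
        = prob {\<omega>\<in>space M. \<forall>j<J. X (t j) \<omega> \<in> A} * prob {\<omega>\<in>space M. X (t J) \<omega> \<in> A}"
      using m_dependent_prob_past_future[OF mdep A A past future] by simp
    also have "\<dots> \<le> q ^ J * q"
      using Suc.IH q order_trans[OF measure_nonneg q] by (intro mult_mono) auto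
    finally show ?thesis by (simp add: mult.commute)
  qed
qed

lemma norm_le_dist_block:
  assumes "i < p"
  shows "norm (x i - y i) \<le> dist_block p x y"
  unfolding dist_block_def
  by (rule real_le_rsqrt) (use assms in \<open>auto intro: member_le_sum\<close>)

lemma (in prob_space) rho_le_prob_dist_head:
  fixes X :: "nat \<Rightarrow> 'a \<Rightarrow> real^'d"
  assumes rv: "X 1 \<in> borel_measurable M" and "0 < p" and z: "z \<in> block_support M p X"
  shows "rho M X p r \<le> prob {\<omega>\<in>space M. dist (X 1 \<omega>) (z 0) \<le> r}"
proof -
  have "rho M X p r \<le> prob {\<omega>\<in>space M. dist_block p (block p X \<omega>) z \<le> r}"
    unfolding rho_def using z by (intro cINF_lower bdd_belowI[of _ 0]) auto
  also have "\<dots> \<le> prob {\<omega>\<in>space M. dist (X 1 \<omega>) (z 0) \<le> r}"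
  proof (rule finite_measure_mono)
    show "{\<omega>\<in>space M. dist (X 1 \<omega>) (z 0) \<le> r} \<in> events"
      using rv by measurable
    show "{\<omega>\<in>space M. dist_block p (block p X \<omega>) z \<le> r} \<subseteq> {\<omega>\<in>space M. dist (X 1 \<omega>) (z 0) \<le> r}"
    proof safe
      fix \<omega> assume "dist_block p (block p X \<omega>) z \<le> r"
      with norm_le_dist_block[OF \<open>0 < p\<close>, of "block p X \<omega>" z] \<open>0 < p\<close>
      show "dist (X 1 \<omega>) (z 0) \<le> r" by (simp add: block_def dist_norm)
    qed
  qed
  finally show ?thesis .
qed

section \<open>Hausdorff distance to a finite sample\<close>

lemma less_hausdorff_dist_iff:
  fixes A S :: "'b::metric_space set"
  assumes A: "finite A" "A \<noteq> {}" and S: "S \<noteq> {}" "bounded S"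
  shows "\<epsilon> < hausdorff_dist A S \<longleftrightarrow>
     (\<exists>x\<in>A. \<epsilon> < infdist x S) \<or> (\<exists>y\<in>S. \<forall>x\<in>A. \<epsilon> < dist y x)"
proof -
  have "(SUP x\<in>A. INF y\<in>S. dist x y) = (SUP x\<in>A. infdist x S)"
    using S by (simp add: infdist_def)
  moreover have "\<epsilon> < (SUP x\<in>A. infdist x S) \<longleftrightarrow> (\<exists>x\<in>A. \<epsilon> < infdist x S)"
    using A by (intro less_cSUP_iff) auto
  moreover have "bdd_above ((\<lambda>y. INF x\<in>A. dist y x) ` S)"
  proof -
    obtain x0 where "x0 \<in> A" using A by blast
    obtain a e where "\<forall>y\<in>S. dist a y \<le> e" using S(2) unfolding bounded_def by blast
    have "(INF x\<in>A. dist y x) \<le> e + dist a x0" if "y \<in> S" for y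
    proof -
      have "(INF x\<in>A. dist y x) \<le> dist y x0" using \<open>x0 \<in> A\<close> A by (intro cINF_lower) auto
      moreover have "dist y x0 \<le> dist y a + dist a x0" by (rule dist_triangle)
      moreover have "dist y a \<le> e" using \<open>\<forall>y\<in>S. dist a y \<le> e\<close> that by (metis dist_commute)
      ultimately show ?thesis by linarith
    qed
    then show ?thesis by (rule bdd_aboveI2)
  qed
  then have "\<epsilon> < (SUP y\<in>S. INF x\<in>A. dist y x) \<longleftrightarrow> (\<exists>y\<in>S. \<forall>x\<in>A. \<epsilon> < dist y x)"
    using S A by (subst less_cSUP_iff) (auto simp: finite_less_Inf_iff)
  ultimately show ?thesis unfolding hausdorff_dist_def less_max_iff_disj by simp
qed

lemma closure_point_far_from_finite:
  fixes A D :: "'b::metric_space set"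
  assumes "finite A" "y \<in> closure D" "\<forall>x\<in>A. \<epsilon> < dist y x"
  obtains d where "d \<in> D" "\<forall>x\<in>A. \<epsilon> < dist d x"
proof (cases "A = {}")
  case True
  have "D \<noteq> {}" using assms(2) by auto
  with True that show ?thesis by blast
next
  case False
  define h where "h = Min ((\<lambda>x. dist y x) ` A)"
  have "\<epsilon> < h" unfolding h_def using assms False by simp
  then obtain d where d: "d \<in> D" "dist d y < h - \<epsilon>"
    using assms(2) unfolding closure_approachable by (meson diff_gt_0_iff_gt)
  have "\<epsilon> < dist d x" if "x \<in> A" for x
  proof -
    have "h \<le> dist y x" unfolding h_def using assms that by simp
    moreover have "dist y x \<le> dist y d + dist d x" by (rule dist_triangle)
    ultimately show ?thesis using d by (simp add: dist_commute)
  qed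
  then show ?thesis using d that by blast
qed

lemma hausdorff_dist_event_measurable:
  fixes X :: "'i \<Rightarrow> 'a \<Rightarrow> 'b::{metric_space, second_countable_topology}"
  assumes rv[measurable]: "\<And>i. X i \<in> borel_measurable M"
    and I: "finite I" "I \<noteq> {}" and S: "S \<noteq> {}" "bounded S"
  shows "{\<omega>\<in>space M. \<epsilon> < hausdorff_dist ((\<lambda>i. X i \<omega>) ` I) S} \<in> sets M"
proof -
  obtain D where D: "countable D" "D \<subseteq> S" "S \<subseteq> closure D" by (rule separable)
  have "(\<exists>y\<in>S. \<forall>x\<in>(\<lambda>i. X i \<omega>) ` I. \<epsilon> < dist y x) \<longleftrightarrow> (\<exists>d\<in>D. \<forall>i\<in>I. \<epsilon> < dist d (X i \<omega>))" for \<omega>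
  proof
    assume "\<exists>y\<in>S. \<forall>x\<in>(\<lambda>i. X i \<omega>) ` I. \<epsilon> < dist y x"
    then obtain y where y: "y \<in> S" "\<forall>x\<in>(\<lambda>i. X i \<omega>) ` I. \<epsilon> < dist y x" by blast
    have "y \<in> closure D" using D y by blast
    obtain d where "d \<in> D" "\<forall>x\<in>(\<lambda>i. X i \<omega>) ` I. \<epsilon> < dist d x"
      by (rule closure_point_far_from_finite[OF finite_imageI[OF I(1)] \<open>y \<in> closure D\<close> y(2)])
    then show "\<exists>d\<in>D. \<forall>i\<in>I. \<epsilon> < dist d (X i \<omega>)" by auto
  next
    assume "\<exists>d\<in>D. \<forall>i\<in>I. \<epsilon> < dist d (X i \<omega>)"
    then show "\<exists>y\<in>S. \<forall>x\<in>(\<lambda>i. X i \<omega>) ` I. \<epsilon> < dist y x" using D(2) by auto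
  qed
  then have "\<epsilon> < hausdorff_dist ((\<lambda>i. X i \<omega>) ` I) S \<longleftrightarrow>
      (\<exists>i\<in>I. \<epsilon> < infdist (X i \<omega>) S) \<or> (\<exists>d\<in>D. \<forall>i\<in>I. \<epsilon> < dist d (X i \<omega>))" for \<omega>
    using I by (simp add: less_hausdorff_dist_iff[OF _ _ S])
  moreover have [measurable]: "(\<lambda>\<omega>. infdist (X i \<omega>) S) \<in> borel_measurable M" for i
    by (rule measurable_compose[OF rv borel_measurable_continuous_onI[OF continuous_on_infdist[OF continuous_on_id]]])
  moreover have "{\<omega>\<in>space M. (\<exists>i\<in>I. \<epsilon> < infdist (X i \<omega>) S) \<or> (\<exists>d\<in>D. \<forall>i\<in>I. \<epsilon> < dist d (X i \<omega>))} \<in> sets M"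
    using I D by (intro sets.sets_Collect_disj sets.sets_Collect_finite_Ex
        sets.sets_Collect_countable_Ex' sets.sets_Collect_finite_All) measurable
  ultimately show ?thesis by simp
qed

section \<open>Separated sets and nets\<close>

definition dist_separated :: "real \<Rightarrow> 'a::metric_space set \<Rightarrow> bool" where
  "dist_separated \<delta> C \<longleftrightarrow> (\<forall>c\<in>C. \<forall>c'\<in>C. c \<noteq> c' \<longrightarrow> \<delta> < dist c c')"

lemma (in prob_space) card_separated_mult_le_1:
  fixes Y :: "'a \<Rightarrow> 'b::{metric_space, second_countable_topology}"
  assumes Y[measurable]: "Y \<in> borel_measurable M" and "finite C" and sep: "dist_separated (2 * r) C"
    and low: "\<And>c. c \<in> C \<Longrightarrow> k \<le> prob {\<omega>\<in>space M. dist (Y \<omega>) c \<le> r}"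
  shows "real (card C) * k \<le> 1"
proof -
  define B where "B c = {\<omega>\<in>space M. dist (Y \<omega>) c \<le> r}" for c
  have "B c \<in> events" for c unfolding B_def by measurable
  then have "B ` C \<subseteq> events" by blast
  have "disjoint_family_on B C"
    unfolding disjoint_family_on_def
  proof (intro ballI impI)
    fix c c' assume "c \<in> C" "c' \<in> C" "c \<noteq> c'"
    then have "2 * r < dist c c'" using sep unfolding dist_separated_def by blast
    moreover have "dist c c' \<le> 2 * r" if "\<omega> \<in> B c" "\<omega> \<in> B c'" for \<omega>
      using that dist_triangle3[of c c' "Y \<omega>"] unfolding B_def by auto
    ultimately show "B c \<inter> B c' = {}" by force
  qed
  have "real (card C) * k \<le> (\<Sum>c\<in>C. prob (B c))"
    using sum_mono[of C "\<lambda>_. k" "\<lambda>c. prob (B c)"] low unfolding B_def by simp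
  also have "\<dots> = prob (\<Union>c\<in>C. B c)"
    using finite_measure_finite_Union[OF \<open>finite C\<close> \<open>B ` C \<subseteq> events\<close> \<open>disjoint_family_on B C\<close>] by simp
  also have "\<dots> \<le> 1" by (rule prob_le_1)
  finally show ?thesis .
qed

lemma exists_separated_net:
  fixes T :: "'a::metric_space set"
  assumes "0 \<le> \<delta>"
    and bound: "\<And>C. finite C \<Longrightarrow> C \<subseteq> T \<Longrightarrow> dist_separated \<delta> C \<Longrightarrow> card C \<le> N"
  obtains C where "finite C" "C \<subseteq> T" "dist_separated \<delta> C"
    and "\<And>t. t \<in> T \<Longrightarrow> \<exists>c\<in>C. dist t c \<le> \<delta>"
proof -
  define admissible where "admissible C \<longleftrightarrow> finite C \<and> C \<subseteq> T \<and> dist_separated \<delta> C" for C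
  have "admissible {}" unfolding admissible_def dist_separated_def by simp
  moreover have "\<forall>C. admissible C \<longrightarrow> card C < N + 1"
    using bound unfolding admissible_def by (simp add: less_Suc_eq_le)
  ultimately obtain C where C: "admissible C" and max: "\<And>C'. admissible C' \<Longrightarrow> card C' \<le> card C"
    using ex_has_greatest_nat by metis
  have "\<exists>c\<in>C. dist t c \<le> \<delta>" if "t \<in> T" for t
  proof (rule ccontr)
    assume "\<not> (\<exists>c\<in>C. dist t c \<le> \<delta>)"
    then have far: "\<forall>c\<in>C. \<delta> < dist t c" by auto
    with \<open>0 \<le> \<delta>\<close> have "t \<notin> C" by fastforce
    have "admissible (insert t C)"
      using C far that unfolding admissible_def dist_separated_def by (auto simp: dist_commute)
    then have "card (insert t C) \<le> card C" by (rule max)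
    with \<open>t \<notin> C\<close> C show False unfolding admissible_def by simp
  qed
  with C that show ?thesis unfolding admissible_def by blast
qed

lemma net_point_far_from_sample:
  fixes A S T C :: "'a::metric_space set"
  assumes A: "finite A" "A \<noteq> {}" "A \<subseteq> S" and S: "bounded S" "S \<subseteq> closure T"
    and net: "\<And>t. t \<in> T \<Longrightarrow> \<exists>c\<in>C. dist t c \<le> \<delta>"
    and "0 \<le> \<epsilon>" and far: "\<epsilon> < hausdorff_dist A S"
  obtains c where "c \<in> C" "\<forall>x\<in>A. \<epsilon> - \<delta> < dist x c"
proof -
  have "\<not> (\<exists>x\<in>A. \<epsilon> < infdist x S)" using A \<open>0 \<le> \<epsilon>\<close> by auto
  moreover have "S \<noteq> {}" using A by blast
  ultimately obtain y where "y \<in> S" "\<forall>x\<in>A. \<epsilon> < dist y x"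
    using far less_hausdorff_dist_iff[OF A(1,2) _ S(1)] by blast
  moreover from this S have "y \<in> closure T" by blast
  ultimately obtain t where t: "t \<in> T" "\<forall>x\<in>A. \<epsilon> < dist t x"
    using closure_point_far_from_finite[OF A(1)] by blast
  obtain c where c: "c \<in> C" "dist t c \<le> \<delta>" using net[OF t(1)] by blast
  have "\<epsilon> - \<delta> < dist x c" if "x \<in> A" for x
  proof -
    have "dist t x \<le> dist t c + dist x c" by (metis dist_commute dist_triangle)
    with t(2) c(2) that show ?thesis by fastforce
  qed
  with c(1) that show ?thesis by blast
qed

section \<open>Support estimation\<close>

lemma geometric_bound_le_if_large:
  fixes \<kappa>\<^sub>1 \<kappa>\<^sub>2 \<alpha> :: real and p n :: nat
  assumes "0 < p" and \<kappa>\<^sub>1: "0 < \<kappa>\<^sub>1" "\<kappa>\<^sub>1 \<le> 1" and \<kappa>\<^sub>2: "0 < \<kappa>\<^sub>2" "\<kappa>\<^sub>2 \<le> 1" and \<alpha>: "0 < \<alpha>" "\<alpha> < 1"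
    and n: "2 * real p / \<kappa>\<^sub>1 * (ln (1 / \<alpha>) + ln (1 / \<kappa>\<^sub>2)) + 3 * real p \<le> real n"
  shows "p \<le> n" and "(1 - \<kappa>\<^sub>1) ^ ((n div p) div 2) / \<kappa>\<^sub>2 \<le> \<alpha>"
proof -
  define L where "L = ln (1 / \<alpha>) + ln (1 / \<kappa>\<^sub>2)"
  define J where "J = (n div p) div 2"
  have "0 < ln (1 / \<alpha>)" "0 \<le> ln (1 / \<kappa>\<^sub>2)" using \<alpha> \<kappa>\<^sub>2 by (auto simp: ln_div)
  then have "0 \<le> L" unfolding L_def by linarith
  then have "0 \<le> 2 * real p / \<kappa>\<^sub>1 * L" using \<kappa>\<^sub>1 by simp
  then show "p \<le> n" using n unfolding L_def by linarith
  have "n < n div p * p + p"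
    using div_mult_mod_eq[of n p] mod_less_divisor[OF \<open>0 < p\<close>, of n] by linarith
  also have "\<dots> = (n div p + 1) * p" by simp
  also have "\<dots> \<le> (2 * J + 2) * p" unfolding J_def by (intro mult_right_mono) auto
  finally have "real n < real ((2 * J + 2) * p)" by (simp only: of_nat_less_iff)
  then have "real n < real p * (2 * real J + 2)" by (simp add: algebra_simps)
  moreover have "real p * (2 * L / \<kappa>\<^sub>1 + 3) = 2 * real p / \<kappa>\<^sub>1 * L + 3 * real p"
    by (simp add: algebra_simps)
  ultimately have "real p * (2 * L / \<kappa>\<^sub>1 + 3) < real p * (2 * real J + 2)"
    using n unfolding L_def[symmetric] by linarith
  then have "L / \<kappa>\<^sub>1 < real J" using \<open>0 < p\<close> by (simp add: mult_less_cancel_left_pos)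
  then have "L \<le> \<kappa>\<^sub>1 * real J" using \<kappa>\<^sub>1 by (simp add: pos_divide_less_eq mult.commute)
  have "(1 - \<kappa>\<^sub>1) ^ J \<le> exp (- \<kappa>\<^sub>1) ^ J"
    using \<kappa>\<^sub>1 exp_ge_add_one_self[of "- \<kappa>\<^sub>1"] by (intro power_mono) auto
  also have "\<dots> = exp (- (\<kappa>\<^sub>1 * real J))" by (simp flip: exp_of_nat_mult)
  also have "\<dots> \<le> exp (- L)" using \<open>L \<le> \<kappa>\<^sub>1 * real J\<close> by simp
  also have "\<dots> = \<alpha> * \<kappa>\<^sub>2" unfolding L_def using \<alpha> \<kappa>\<^sub>2 by (simp add: ln_div exp_add)
  finally show "(1 - \<kappa>\<^sub>1) ^ J / \<kappa>\<^sub>2 \<le> \<alpha>" using \<kappa>\<^sub>2 by (simp add: divide_le_eq)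
qed

locale mdep_support_estimation = prob_space M
  for M :: "'a measure" and X :: "nat \<Rightarrow> 'a \<Rightarrow> real^'d"
    and m :: nat and \<epsilon>0 :: real and \<kappa> :: "real \<Rightarrow> real" +
  assumes rv[measurable]: "\<And>i. X i \<in> borel_measurable M"
    and stat: "stationary M X"
    and mdep: "m_dependent M m X"
    and cpt: "compact (rv_support M (X 1))"
    and kappa: "\<And>\<epsilon>. 0 < \<epsilon> \<Longrightarrow> \<epsilon> < \<epsilon>0 \<Longrightarrow> \<kappa> \<epsilon> > 0 \<and> rho M X (m + 1) \<epsilon> \<ge> \<kappa> \<epsilon>"
begin

abbreviation support :: "(real^'d) set" where
  "support \<equiv> rv_support M (X 1)"

text \<open>The hypothesis on \<open>\<rho>\<close> only controls balls around these points, not around all of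
  the support of \<open>X 1\<close>, which merely lies in their closure.\<close>

definition block_heads :: "(real^'d) set" where
  "block_heads = (\<lambda>z. z 0) ` block_support M (m + 1) X"

lemma support_borel[measurable]: "support \<in> sets borel"
  by (rule borel_closed[OF closed_rv_support])

lemma AE_in_support: "AE \<omega> in M. \<forall>i. X i \<omega> \<in> support"
proof -
  have "AE \<omega> in M. X i \<omega> \<in> support" for i
  proof -
    have "{\<omega>\<in>space M. X i \<omega> \<in> support} \<in> events" by measurable
    moreover have "prob {\<omega>\<in>space M. X i \<omega> \<in> support} = 1"
      using prob_in_rv_support[OF rv[of 1]] stationary_prob_eq[OF rv stat support_borel, of i 1]
      by simp
    ultimately have "AE \<omega> in M. \<omega> \<in> {\<omega>\<in>space M. X i \<omega> \<in> support}"
      by (simp add: prob_eq_1)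
    then show ?thesis by eventually_elim simp
  qed
  then show ?thesis by (simp add: AE_all_countable)
qed

lemma support_nonempty: "support \<noteq> {}"
  using prob_in_rv_support[OF rv[of 1]] by force

lemma support_bounded: "bounded support"
  using cpt by (rule compact_imp_bounded)

lemma support_subset_closure_block_heads: "support \<subseteq> closure block_heads"
proof (rule rv_support_subset)
  have "AE \<omega> in M. X 1 \<omega> \<in> closure block_heads"
    using AE_block_in_block_support[of "m + 1" X]
  proof eventually_elim
    case (elim \<omega>)
    then have "block (m + 1) X \<omega> 0 \<in> block_heads" unfolding block_heads_def by blast
    then show ?case using closure_subset by (auto simp: block_def)
  qed
  moreover have [measurable]: "closure block_heads \<in> sets borel" by (intro borel_closed closed_closure)
  then have "{\<omega>\<in>space M. X 1 \<omega> \<in> closure block_heads} \<in> events" by measurable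
  ultimately show "prob {\<omega>\<in>space M. X 1 \<omega> \<in> closure block_heads} = 1"
    by (subst prob_eq_1) auto
qed simp

lemma kappa_le_prob_ball:
  assumes "c \<in> block_heads" "0 < r" "r < \<epsilon>0"
  shows "\<kappa> r \<le> prob {\<omega>\<in>space M. dist (X i \<omega>) c \<le> r}"
proof -
  obtain z where z: "z \<in> block_support M (m + 1) X" "c = z 0"
    using assms(1) unfolding block_heads_def by blast
  have ball: "{x. dist x c \<le> r} \<in> sets borel"
    by (intro borel_closed closed_Collect_le continuous_intros)
  have "\<kappa> r \<le> rho M X (m + 1) r" using kappa[OF assms(2,3)] by simp
  also have "\<dots> \<le> prob {\<omega>\<in>space M. dist (X 1 \<omega>) c \<le> r}"
    using rho_le_prob_dist_head[OF rv, of "m + 1" z] z by simp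
  also have "\<dots> = prob {\<omega>\<in>space M. dist (X i \<omega>) c \<le> r}"
    using stationary_prob_eq[OF rv stat ball, of 1 i] by simp
  finally show ?thesis .
qed

lemma kappa_pos_le_1:
  assumes "0 < r" "r < \<epsilon>0"
  shows "0 < \<kappa> r" "\<kappa> r \<le> 1"
proof -
  obtain c where "c \<in> block_heads"
    using support_nonempty support_subset_closure_block_heads by (metis closure_empty ex_in_conv subset_empty)
  then show "\<kappa> r \<le> 1" using kappa_le_prob_ball[OF _ assms, of c 0] prob_le_1 by (meson order_trans)
  show "0 < \<kappa> r" using kappa[OF assms] by simp
qed

lemma prob_far_from_block_head_le:
  assumes "c \<in> block_heads" "0 < r" "r < \<epsilon>0"
  shows "prob {\<omega>\<in>space M. \<forall>i\<in>{1..n}. r < dist (X i \<omega>) c}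
    \<le> (1 - \<kappa> r) ^ ((n div (m + 1)) div 2)"
proof -
  define J where "J = (n div (m + 1)) div 2"
  define t where "t j = (2 * j + 1) * (m + 1)" for j
  have far[measurable]: "{x. r < dist x c} \<in> sets borel"
    by (intro borel_open open_Collect_less continuous_intros)
  have "prob {\<omega>\<in>space M. X i \<omega> \<in> {x. r < dist x c}} \<le> 1 - \<kappa> r" for i
  proof -
    have "{\<omega>\<in>space M. X i \<omega> \<in> {x. r < dist x c}} = space M - {\<omega>\<in>space M. dist (X i \<omega>) c \<le> r}"
      by auto
    moreover have "{\<omega>\<in>space M. dist (X i \<omega>) c \<le> r} \<in> events" by measurable
    ultimately show ?thesis using prob_compl kappa_le_prob_ball[OF assms, of i] by simp
  qed
  then have "prob {\<omega>\<in>space M. \<forall>j<J. X (t j) \<omega> \<in> {x. r < dist x c}} \<le> (1 - \<kappa> r) ^ J"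
    by (intro m_dependent_prob_all_le_power[OF mdep _ far]) (simp add: t_def)
  moreover have "t j \<in> {1..n}" if "j < J" for j
  proof -
    have "(2 * j + 1) * (m + 1) \<le> n div (m + 1) * (m + 1)"
      using that unfolding J_def by (intro mult_right_mono) auto
    then show ?thesis unfolding t_def using div_times_less_eq_dividend[of n "m + 1"] by simp
  qed
  then have "{\<omega>\<in>space M. \<forall>i\<in>{1..n}. r < dist (X i \<omega>) c}
      \<subseteq> {\<omega>\<in>space M. \<forall>j<J. X (t j) \<omega> \<in> {x. r < dist x c}}"
    by auto
  then have "prob {\<omega>\<in>space M. \<forall>i\<in>{1..n}. r < dist (X i \<omega>) c}
      \<le> prob {\<omega>\<in>space M. \<forall>j<J. X (t j) \<omega> \<in> {x. r < dist x c}}"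
    by (rule finite_measure_mono) measurable
  ultimately show ?thesis unfolding J_def[symmetric] by linarith
qed

lemma hausdorff_event_sets:
  assumes "1 \<le> n"
  shows "{\<omega> \<in> space M. \<epsilon> < hausdorff_dist ((\<lambda>i. X i \<omega>) ` {1..n}) support} \<in> events"
  using assms support_nonempty support_bounded by (intro hausdorff_dist_event_measurable) auto

lemma block_heads_net:
  assumes r: "0 < r" "r < \<epsilon>0"
  obtains C where "finite C" "C \<subseteq> block_heads" "real (card C) * \<kappa> r \<le> 1"
    and "\<And>t. t \<in> block_heads \<Longrightarrow> \<exists>c\<in>C. dist t c \<le> 2 * r"
proof -
  have packing: "real (card C) * \<kappa> r \<le> 1"
    if "finite C" "C \<subseteq> block_heads" "dist_separated (2 * r) C" for C
  proof (rule card_separated_mult_le_1[OF rv[of 1] that(1,3)])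
    show "\<kappa> r \<le> prob {\<omega>\<in>space M. dist (X 1 \<omega>) c \<le> r}" if "c \<in> C" for c
      using kappa_le_prob_ball[OF _ r] \<open>C \<subseteq> block_heads\<close> that by blast
  qed
  have "0 < \<kappa> r" using kappa_pos_le_1[OF r] by simp
  obtain C where "finite C" "C \<subseteq> block_heads" "dist_separated (2 * r) C"
    and "\<And>t. t \<in> block_heads \<Longrightarrow> \<exists>c\<in>C. dist t c \<le> 2 * r"
  proof (rule exists_separated_net[of "2 * r" block_heads "nat \<lfloor>1 / \<kappa> r\<rfloor>"])
    show "card C \<le> nat \<lfloor>1 / \<kappa> r\<rfloor>"
      if "finite C" "C \<subseteq> block_heads" "dist_separated (2 * r) C" for C
      using packing[OF that] \<open>0 < \<kappa> r\<close> by (intro le_nat_floor) (simp add: field_simps)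
  qed (use r in auto)
  with packing that show ?thesis by blast
qed

lemma AE_far_sample_imp_far_from_net:
  assumes "1 \<le> n" "0 \<le> \<epsilon>" and net: "\<And>t. t \<in> block_heads \<Longrightarrow> \<exists>c\<in>C. dist t c \<le> \<delta>"
  shows "AE \<omega> in M. \<epsilon> < hausdorff_dist ((\<lambda>i. X i \<omega>) ` {1..n}) support
                    \<longrightarrow> (\<exists>c\<in>C. \<forall>i\<in>{1..n}. \<epsilon> - \<delta> < dist (X i \<omega>) c)"
  using AE_in_support
proof eventually_elim
  case (elim \<omega>)
  show ?case
  proof
    assume far: "\<epsilon> < hausdorff_dist ((\<lambda>i. X i \<omega>) ` {1..n}) support"
    obtain c where "c \<in> C" "\<forall>x\<in>(\<lambda>i. X i \<omega>) ` {1..n}. \<epsilon> - \<delta> < dist x c"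
      by (rule net_point_far_from_sample[OF _ _ _ support_bounded
            support_subset_closure_block_heads net \<open>0 \<le> \<epsilon>\<close> far])
        (use elim \<open>1 \<le> n\<close> in auto)
    then show "\<exists>c\<in>C. \<forall>i\<in>{1..n}. \<epsilon> - \<delta> < dist (X i \<omega>) c" by auto
  qed
qed

lemma hausdorff_tail_bound:
  assumes \<epsilon>: "0 < \<epsilon>" "\<epsilon> < \<epsilon>0" and "1 \<le> n"
  shows "prob {\<omega> \<in> space M. \<epsilon> < hausdorff_dist ((\<lambda>i. X i \<omega>) ` {1..n}) support}
    \<le> (1 - \<kappa> (\<epsilon> / 2)) ^ ((n div (m + 1)) div 2) / \<kappa> (\<epsilon> / 4)"
proof -
  define q where "q = (1 - \<kappa> (\<epsilon> / 2)) ^ ((n div (m + 1)) div 2)"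
  define Far where "Far c = {\<omega>\<in>space M. \<forall>i\<in>{1..n}. \<epsilon> / 2 < dist (X i \<omega>) c}" for c
  have "0 < \<kappa> (\<epsilon> / 4)" "\<kappa> (\<epsilon> / 2) \<le> 1" using kappa_pos_le_1 \<epsilon> by auto
  then have "0 \<le> q" unfolding q_def by simp
  obtain C where C: "finite C" "C \<subseteq> block_heads" "real (card C) * \<kappa> (\<epsilon> / 4) \<le> 1"
    and net: "\<And>t. t \<in> block_heads \<Longrightarrow> \<exists>c\<in>C. dist t c \<le> \<epsilon> / 2"
    using block_heads_net[of "\<epsilon> / 4"] \<epsilon> by auto
  have "AE \<omega> in M. \<omega> \<in> {\<omega> \<in> space M. \<epsilon> < hausdorff_dist ((\<lambda>i. X i \<omega>) ` {1..n}) support}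
                    \<longrightarrow> \<omega> \<in> (\<Union>c\<in>C. Far c)"
  proof -
    have "AE \<omega> in M. \<epsilon> < hausdorff_dist ((\<lambda>i. X i \<omega>) ` {1..n}) support
                    \<longrightarrow> (\<exists>c\<in>C. \<forall>i\<in>{1..n}. \<epsilon> - \<epsilon> / 2 < dist (X i \<omega>) c)"
      by (rule AE_far_sample_imp_far_from_net) (use \<open>1 \<le> n\<close> \<epsilon> net in auto)
    then show ?thesis
      by eventually_elim (auto simp: Far_def)
  qed
  moreover have "Far c \<in> events" for c unfolding Far_def by measurable
  ultimately have "prob {\<omega> \<in> space M. \<epsilon> < hausdorff_dist ((\<lambda>i. X i \<omega>) ` {1..n}) support}
      \<le> prob (\<Union>c\<in>C. Far c)"
    using C(1) hausdorff_event_sets[OF \<open>1 \<le> n\<close>] by (intro finite_measure_mono_AE) auto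
  also have "\<dots> \<le> (\<Sum>c\<in>C. prob (Far c))"
    using C(1) \<open>\<And>c. Far c \<in> events\<close> by (intro finite_measure_subadditive_finite) auto
  also have "\<dots> \<le> (\<Sum>c\<in>C. q)"
  proof (rule sum_mono)
    fix c assume "c \<in> C"
    with C(2) \<epsilon> show "prob (Far c) \<le> q"
      unfolding Far_def q_def by (intro prob_far_from_block_head_le) auto
  qed
  also have "\<dots> = real (card C) * q" by simp
  also have "\<dots> \<le> q / \<kappa> (\<epsilon> / 4)"
    using mult_right_mono[OF C(3) \<open>0 \<le> q\<close>] \<open>0 < \<kappa> (\<epsilon> / 4)\<close> by (simp add: field_simps)
  finally show ?thesis unfolding q_def .
qed

lemma prob_hausdorff_dist_le_ge:
  assumes \<epsilon>: "0 < \<epsilon>" "\<epsilon> < \<epsilon>0" and \<alpha>: "0 < \<alpha>" "\<alpha> < 1"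
    and n: "2 * real (m + 1) / \<kappa> (\<epsilon> / 2) * (ln (1 / \<alpha>) + ln (1 / \<kappa> (\<epsilon> / 4)))
              + 3 * real (m + 1) \<le> real n"
  shows "1 - \<alpha> \<le> prob {\<omega> \<in> space M. hausdorff_dist ((\<lambda>i. X i \<omega>) ` {1..n}) support \<le> \<epsilon>}"
proof -
  have "0 < \<kappa> (\<epsilon> / 2)" "\<kappa> (\<epsilon> / 2) \<le> 1" "0 < \<kappa> (\<epsilon> / 4)" "\<kappa> (\<epsilon> / 4) \<le> 1"
    using kappa_pos_le_1 \<epsilon> by auto
  from geometric_bound_le_if_large[OF _ this \<alpha> n]
  have "1 \<le> n" "(1 - \<kappa> (\<epsilon> / 2)) ^ ((n div (m + 1)) div 2) / \<kappa> (\<epsilon> / 4) \<le> \<alpha>"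
    by auto
  with hausdorff_tail_bound[OF \<epsilon>]
  have "prob {\<omega> \<in> space M. \<epsilon> < hausdorff_dist ((\<lambda>i. X i \<omega>) ` {1..n}) support} \<le> \<alpha>"
    by force
  moreover have "{\<omega> \<in> space M. hausdorff_dist ((\<lambda>i. X i \<omega>) ` {1..n}) support \<le> \<epsilon>}
      = space M - {\<omega> \<in> space M. \<epsilon> < hausdorff_dist ((\<lambda>i. X i \<omega>) ` {1..n}) support}"
    by auto
  ultimately show ?thesis
    using prob_compl[OF hausdorff_event_sets[OF \<open>1 \<le> n\<close>]] by simp
qed

end

theorem proposition4p1:
  fixes M :: "'a measure" and X :: "nat \<Rightarrow> 'a \<Rightarrow> real^'d"
    and m :: nat and \<epsilon>0 :: real and \<kappa> :: "real \<Rightarrow> real"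
  assumes P: "prob_space M"
    and rv: "\<And>i. X i \<in> borel_measurable M"
    and stat: "stationary M X"
    and mdep: "m_dependent M m X"
    and cpt: "compact (rv_support M (X 1))"
    and eps0: "\<epsilon>0 > 0"
    and kappa: "\<And>\<epsilon>. 0 < \<epsilon> \<Longrightarrow> \<epsilon> < \<epsilon>0 \<Longrightarrow> \<kappa> \<epsilon> > 0 \<and> rho M X (m + 1) \<epsilon> \<ge> \<kappa> \<epsilon>"
  shows "(\<forall>\<epsilon> n. 0 < \<epsilon> \<longrightarrow> \<epsilon> < \<epsilon>0 \<longrightarrow> n \<ge> m + 1 \<longrightarrow>
            {\<omega> \<in> space M. hausdorff_dist ((\<lambda>i. X i \<omega>) ` {1..n}) (rv_support M (X 1)) > \<epsilon>}
               \<in> sets M \<and>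
            measure M {\<omega> \<in> space M. hausdorff_dist ((\<lambda>i. X i \<omega>) ` {1..n}) (rv_support M (X 1)) > \<epsilon>}
              \<le> (1 - \<kappa> (\<epsilon> / 2)) ^ ((n div (m + 1)) div 2) / \<kappa> (\<epsilon> / 4))
       \<and> (\<forall>\<epsilon> \<alpha> n. 0 < \<epsilon> \<longrightarrow> \<epsilon> < \<epsilon>0 \<longrightarrow> 0 < \<alpha> \<longrightarrow> \<alpha> < 1 \<longrightarrow>
            real n \<ge> 2 * real (m + 1) / \<kappa> (\<epsilon> / 2) * (ln (1 / \<alpha>) + ln (1 / \<kappa> (\<epsilon> / 4)))
                     + 3 * real (m + 1) \<longrightarrow>
            measure M {\<omega> \<in> space M. hausdorff_dist ((\<lambda>i. X i \<omega>) ` {1..n}) (rv_support M (X 1)) \<le> \<epsilon>}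
              \<ge> 1 - \<alpha>)"
proof -
  interpret mdep_support_estimation M X m \<epsilon>0 \<kappa>
    using P rv stat mdep cpt kappa
    unfolding mdep_support_estimation_def mdep_support_estimation_axioms_def by blast
  show ?thesis
    by (intro conjI allI impI hausdorff_event_sets hausdorff_tail_bound prob_hausdorff_dist_le_ge) auto
qed

end
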